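(* For every t-relation $r\subseteq\mathcal{D}$, every initial preference formula $F$, and every sequence $X\in\{\mathsf{T},\mathsf{S}\}^*$, we have $\mathrm{Best}_{\succ_{X\mathsf{S}}}(r)\subseteq \mathrm{Best}_{\succ_{X}}(r)$.
   Context: Fix attribute–taxonomy pairs $A_1{:}T_1,\dots,A_d{:}T_d$ with distinct attribute names, where each taxonomy $T_i=(V_i,\le_{V_i})$ is a poset. A t-tuple over a t-schema $S\subseteq\{A_1{:}T_1,\dots,A_d{:}T_d\}$ maps each $A_i$ in $S$ to a value of $V_i$; $\mathcal{D}$ is the set of all t-tuples over all such t-schemas, and a t-relation is a finite set of t-tuples. A preference relation is a binary relation $\succeq$ on $\mathcal{D}$; its strict part is $t_1\succ t_2$ iff $t_1\succeq t_2$ and not $t_2\succeq t_1$. Preferences are given by a formula $F(x,y)=\bigvee_i P_i(x,y)$, a disjunction of statements; each statement $P_i$ is a disjunction of clauses, each clause a satisfiable conjunction of atoms of the forms $x[A_i]\le_{V_i} v$, $x[A_i]\not\le_{V_i} v$, $y[A_i]\le_{V_i} v$, $y[A_i]\not\le_{V_i} v$; the formula induces $t_1\succeq t_2\iff F(t_1,t_2)$. Operator $\mathsf{T}$ maps a formula to one (obtained by adding statements built from composable clause pairs $C_m^b(x)\wedge C_q^w(y)$, where $C^b$ / $C^w$ are the $x$- / $y$-parts of a clause) inducing the transitive closure over $\mathcal{D}$ of the induced relation. Operator $\mathsf{S}$ (specificity-based refinement): repeat rounds; in a round, for each statement $P_i$ let $\mathrm{Impl}(P_i)$ be the set of statements $P_j$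 such that $P_j(t_2,t_1)\Rightarrow P_i(t_1,t_2)$ for all $t_1,t_2\in\mathcal{D}$ but not conversely; simultaneously replace every $P_i$ with nonempty $\mathrm{Impl}(P_i)$ by $P_i(x,y)\wedge\bigwedge_{P_j\in \mathrm{Impl}(P_i)}\neg P_j(y,x)$; stop when no $\mathrm{Impl}$ set is nonempty. After each operator, contradictory clauses and statements subsumed by others are removed. For $X\in\{\mathsf{T},\mathsf{S}\}^*$, $\succeq_X$ (with strict part $\succ_X$) is the relation induced by applying the operators of $X$ in order to the initial formula $F$ ($\succeq_\varepsilon=\succeq$). The Best operator is $\mathrm{Best}_\succ(r)=\{t_1\in r\mid \nexists t_2\in r,\ t_2\succ t_1\}$. *)

theory Defs
  imports Main "HOL-Library.While_Combinator"
begin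

text \<open>Attributes have type 'a (the finite set Ats of attribute names A_1..A_d);
  values have type 'v; V A is the value set of the taxonomy of attribute A and
  le A its partial order.\<close>

definition taxonomies :: "'a set \<Rightarrow> ('a \<Rightarrow> 'v set) \<Rightarrow> ('a \<Rightarrow> 'v \<Rightarrow> 'v \<Rightarrow> bool) \<Rightarrow> bool" where
  "taxonomies Ats V le \<longleftrightarrow> finite Ats \<and>
     (\<forall>A\<in>Ats. (\<forall>v\<in>V A. le A v v)
       \<and> (\<forall>u\<in>V A. \<forall>v\<in>V A. le A u v \<and> le A v u \<longrightarrow> u = v)
       \<and> (\<forall>u\<in>V A. \<forall>v\<in>V A. \<forall>w\<in>V A. le A u v \<and> le A v w \<longrightarrow> le A u w))"

text \<open>A t-tuple is a partial map from attributes to values; its domain is its t-schema.\<close>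
type_synonym ('a,'v) ttuple = "'a \<rightharpoonup> 'v"

definition Dom :: "'a set \<Rightarrow> ('a \<Rightarrow> 'v set) \<Rightarrow> ('a,'v) ttuple set" where
  "Dom Ats V = {t. dom t \<subseteq> Ats \<and> (\<forall>A \<in> dom t. the (t A) \<in> V A)}"

datatype ('a,'v) atom = XLe 'a 'v | XNle 'a 'v | YLe 'a 'v | YNle 'a 'v

type_synonym ('a,'v) clause = "('a,'v) atom list"      \<comment> \<open>conjunction\<close>
type_synonym ('a,'v) stmt = "('a,'v) clause list"      \<comment> \<open>disjunction of clauses\<close>
type_synonym ('a,'v) formula = "('a,'v) stmt list"     \<comment> \<open>disjunction of statements\<close>

definition val_le :: "('a \<Rightarrow> 'v \<Rightarrow> 'v \<Rightarrow> bool) \<Rightarrow> ('a,'v) ttuple \<Rightarrow> 'a \<Rightarrow> 'v \<Rightarrow> bool" where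
  "val_le le t A v \<longleftrightarrow> (case t A of None \<Rightarrow> False | Some u \<Rightarrow> le A u v)"

fun atom_sem :: "('a \<Rightarrow> 'v \<Rightarrow> 'v \<Rightarrow> bool) \<Rightarrow> ('a,'v) atom \<Rightarrow> ('a,'v) ttuple \<Rightarrow> ('a,'v) ttuple \<Rightarrow> bool" where
  "atom_sem le (XLe A v) x y = val_le le x A v"
| "atom_sem le (XNle A v) x y = (\<not> val_le le x A v)"
| "atom_sem le (YLe A v) x y = val_le le y A v"
| "atom_sem le (YNle A v) x y = (\<not> val_le le y A v)"

definition clause_sem where
  "clause_sem le C x y \<longleftrightarrow> (\<forall>a\<in>set C. atom_sem le a x y)"

definition stmt_sem where
  "stmt_sem le P x y \<longleftrightarrow> (\<exists>C\<in>set P. clause_sem le C x y)"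

definition formula_sem where
  "formula_sem le F x y \<longleftrightarrow> (\<exists>P\<in>set F. stmt_sem le P x y)"

definition pref :: "'a set \<Rightarrow> ('a \<Rightarrow> 'v set) \<Rightarrow> ('a \<Rightarrow> 'v \<Rightarrow> 'v \<Rightarrow> bool) \<Rightarrow> ('a,'v) formula
    \<Rightarrow> ('a,'v) ttuple \<Rightarrow> ('a,'v) ttuple \<Rightarrow> bool" where
  "pref Ats V le F t1 t2 \<longleftrightarrow> t1 \<in> Dom Ats V \<and> t2 \<in> Dom Ats V \<and> formula_sem le F t1 t2"

definition strict :: "('b \<Rightarrow> 'b \<Rightarrow> bool) \<Rightarrow> 'b \<Rightarrow> 'b \<Rightarrow> bool" where
  "strict R t1 t2 \<longleftrightarrow> R t1 t2 \<and> \<not> R t2 t1"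

definition Best :: "('b \<Rightarrow> 'b \<Rightarrow> bool) \<Rightarrow> 'b set \<Rightarrow> 'b set" where
  "Best S r = {t1 \<in> r. \<not> (\<exists>t2\<in>r. S t2 t1)}"

fun atom_attr where
  "atom_attr (XLe A v) = A" | "atom_attr (XNle A v) = A" | "atom_attr (YLe A v) = A" | "atom_attr (YNle A v) = A"
fun atom_val where
  "atom_val (XLe A v) = v" | "atom_val (XNle A v) = v" | "atom_val (YLe A v) = v" | "atom_val (YNle A v) = v"

definition clause_sat where
  "clause_sat Ats V le C \<longleftrightarrow> (\<exists>t1\<in>Dom Ats V. \<exists>t2\<in>Dom Ats V. clause_sem le C t1 t2)"

definition wf_formula where
  "wf_formula Ats V le F \<longleftrightarrow> (\<forall>P\<in>set F. \<forall>C\<in>set P. clause_sat Ats V le C \<and>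
      (\<forall>a\<in>set C. atom_attr a \<in> Ats \<and> atom_val a \<in> V (atom_attr a)))"

definition stmt_imp where
  "stmt_imp Ats V le P Q \<longleftrightarrow>
     (\<forall>t1\<in>Dom Ats V. \<forall>t2\<in>Dom Ats V. stmt_sem le P t1 t2 \<longrightarrow> stmt_sem le Q t1 t2)"

definition remove_contr where
  "remove_contr Ats V le F = map (filter (clause_sat Ats V le)) F"

text \<open>Statement i is subsumed if it implies another statement j which it is not
  equivalent to; among equivalent statements only the first one is kept.\<close>
definition subsumed where
  "subsumed Ats V le G i \<longleftrightarrow> (\<exists>j<length G. j \<noteq> i \<and> stmt_imp Ats V le (G!i) (G!j) \<and>
      (\<not> stmt_imp Ats V le (G!j) (G!i) \<or> j < i))"

definition remove_subsumed where
  "remove_subsumed Ats V le G = [G!i. i \<leftarrow> [0..<length G], \<not> subsumed Ats V le G i]"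

definition cleanup where
  "cleanup Ats V le F = remove_subsumed Ats V le (remove_contr Ats V le F)"

fun is_xatom where
  "is_xatom (XLe A v) = True" | "is_xatom (XNle A v) = True" | "is_xatom (YLe A v) = False" | "is_xatom (YNle A v) = False"

definition bpart :: "('a,'v) clause \<Rightarrow> ('a,'v) clause" where "bpart C = filter is_xatom C"
definition wpart :: "('a,'v) clause \<Rightarrow> ('a,'v) clause" where "wpart C = filter (\<lambda>a. \<not> is_xatom a) C"

definition composable where
  "composable Ats V le C1 C2 \<longleftrightarrow>
     (\<exists>t\<in>Dom Ats V. (\<exists>z. clause_sem le (wpart C1) z t) \<and> (\<exists>z. clause_sem le (bpart C2) t z))"

definition all_clauses :: "('a,'v) formula \<Rightarrow> ('a,'v) clause list" where
  "all_clauses F = concat F"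

definition opT where
  "opT Ats V le F = cleanup Ats V le
     (F @ [[bpart Cm @ wpart Cq]. Cm \<leftarrow> all_clauses F, Cq \<leftarrow> all_clauses F,
            (Cm, Cq) \<in> {(C1, C2). C1 \<in> set (all_clauses F) \<and> C2 \<in> set (all_clauses F)
                                  \<and> composable Ats V le C1 C2}\<^sup>+])"

fun neg_atom where
  "neg_atom (XLe A v) = XNle A v" | "neg_atom (XNle A v) = XLe A v"
| "neg_atom (YLe A v) = YNle A v" | "neg_atom (YNle A v) = YLe A v"

fun swap_atom where
  "swap_atom (XLe A v) = YLe A v" | "swap_atom (XNle A v) = YNle A v"
| "swap_atom (YLe A v) = XLe A v" | "swap_atom (YNle A v) = XNle A v"

definition conj_stmt :: "('a,'v) stmt \<Rightarrow> ('a,'v) stmt \<Rightarrow> ('a,'v) stmt" where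
  "conj_stmt P Q = [C @ D. C \<leftarrow> P, D \<leftarrow> Q]"

text \<open>The statement \<not> P(y,x), in disjunctive normal form.\<close>
definition neg_swap_stmt :: "('a,'v) stmt \<Rightarrow> ('a,'v) stmt" where
  "neg_swap_stmt P = foldr (\<lambda>C acc. conj_stmt (map (\<lambda>a. [neg_atom (swap_atom a)]) C) acc) P [[]]"

definition rev_imp where
  "rev_imp Ats V le Pj Pi \<longleftrightarrow>
     (\<forall>t1\<in>Dom Ats V. \<forall>t2\<in>Dom Ats V. stmt_sem le Pj t2 t1 \<longrightarrow> stmt_sem le Pi t1 t2)"

definition Impl :: "'a set \<Rightarrow> ('a \<Rightarrow> 'v set) \<Rightarrow> ('a \<Rightarrow> 'v \<Rightarrow> 'v \<Rightarrow> bool) \<Rightarrow> ('a,'v) formula \<Rightarrow> nat \<Rightarrow> nat set" where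
  "Impl Ats V le G i = {j. j < length G \<and> rev_imp Ats V le (G!j) (G!i) \<and> \<not> rev_imp Ats V le (G!i) (G!j)}"

definition S_round where
  "S_round Ats V le G = map (\<lambda>i. if Impl Ats V le G i = {} then G!i
       else foldl conj_stmt (G!i) (map (\<lambda>j. neg_swap_stmt (G!j)) (sorted_list_of_set (Impl Ats V le G i))))
     [0..<length G]"

text \<open>Rounds are repeated until no Impl set is nonempty.  Should the iteration not
  terminate, the formula is left unchanged.\<close>
definition opS where
  "opS Ats V le F = cleanup Ats V le
     (case while_option (\<lambda>G. \<exists>i<length G. Impl Ats V le G i \<noteq> {}) (S_round Ats V le) F of
        Some G \<Rightarrow> G | None \<Rightarrow> F)"

datatype op = OpT | OpS

fun apply_op where
  "apply_op Ats V le OpT F = opT Ats V le F"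
| "apply_op Ats V le OpS F = opS Ats V le F"

definition apply_ops :: "'a set \<Rightarrow> ('a \<Rightarrow> 'v set) \<Rightarrow> ('a \<Rightarrow> 'v \<Rightarrow> 'v \<Rightarrow> bool) \<Rightarrow> op list \<Rightarrow> ('a,'v) formula \<Rightarrow> ('a,'v) formula" where
  "apply_ops Ats V le X F = fold (apply_op Ats V le) X F"

definition prefX where
  "prefX Ats V le F X = pref Ats V le (apply_ops Ats V le X F)"

end

theory Submission
  imports Defs
begin

text \<open>Let G be the formula obtained from F by X.  A round of S only conjoins statements
  with negated reversed statements, so the relation it induces is contained in the one
  induced by G; and a conjunct not P_j(y,x) can only fail on a pair x, y with
  G(y,x), so every strict preference of G survives.  Both properties are preserved by
  iteration and by clean-up, which does not change the induced relation on D.  Hence the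
  strict part can only grow, and the best tuples can only become fewer.\<close>

definition strict_refinement :: "('b \<Rightarrow> 'b \<Rightarrow> bool) \<Rightarrow> ('b \<Rightarrow> 'b \<Rightarrow> bool) \<Rightarrow> bool" where
  "strict_refinement R R' \<longleftrightarrow> R' \<le> R \<and> strict R \<le> R'"

lemma strict_refinement_strict_mono:
  "strict_refinement R R' \<Longrightarrow> strict R \<le> strict R'"
  unfolding strict_refinement_def strict_def le_fun_def le_bool_def by blast

lemma strict_refinement_refl: "strict_refinement R R"
  by (auto simp: strict_refinement_def strict_def)

lemma strict_refinement_trans:
  assumes "strict_refinement R R'" and "strict_refinement R' R''"
  shows "strict_refinement R R''"
  using strict_refinement_strict_mono[OF assms(1)] assms
  by (auto simp: strict_refinement_def)

lemma Best_antimono: "S \<le> S' \<Longrightarrow> Best S' r \<subseteq> Best S r"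
  by (auto simp: Best_def)

lemma formula_sem_conv_nth: "formula_sem le G x y \<longleftrightarrow> (\<exists>i<length G. stmt_sem le (G!i) x y)"
  unfolding formula_sem_def by (metis in_set_conv_nth)


lemma clause_sem_append:
  "clause_sem le (C @ D) x y \<longleftrightarrow> clause_sem le C x y \<and> clause_sem le D x y"
  by (auto simp: clause_sem_def)

lemma stmt_sem_conj_stmt:
  "stmt_sem le (conj_stmt P Q) x y \<longleftrightarrow> stmt_sem le P x y \<and> stmt_sem le Q x y"
  by (auto simp: stmt_sem_def conj_stmt_def clause_sem_append)

lemma stmt_sem_foldl_conj_stmt:
  "stmt_sem le (foldl conj_stmt P (map f js)) x y \<longleftrightarrow>
     stmt_sem le P x y \<and> (\<forall>j\<in>set js. stmt_sem le (f j) x y)"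
  by (induction js arbitrary: P) (auto simp: stmt_sem_conj_stmt)

lemma atom_sem_neg_swap: "atom_sem le (neg_atom (swap_atom a)) x y \<longleftrightarrow> \<not> atom_sem le a y x"
  by (cases a) auto

lemma stmt_sem_neg_swap_stmt: "stmt_sem le (neg_swap_stmt P) x y \<longleftrightarrow> \<not> stmt_sem le P y x"
proof (induction P)
  case Nil
  then show ?case by (simp add: neg_swap_stmt_def stmt_sem_def clause_sem_def)
next
  case (Cons C P)
  have "neg_swap_stmt (C # P) = conj_stmt (map (\<lambda>a. [neg_atom (swap_atom a)]) C) (neg_swap_stmt P)"
    by (simp add: neg_swap_stmt_def)
  moreover have "stmt_sem le (map (\<lambda>a. [neg_atom (swap_atom a)]) C) x y \<longleftrightarrow> \<not> clause_sem le C y x"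
    by (auto simp: stmt_sem_def clause_sem_def atom_sem_neg_swap)
  moreover have "stmt_sem le (C # P) y x \<longleftrightarrow> clause_sem le C y x \<or> stmt_sem le P y x"
    by (simp add: stmt_sem_def)
  ultimately show ?case using Cons by (simp only: stmt_sem_conj_stmt) blast
qed


lemma pref_remove_contr: "pref Ats V le (remove_contr Ats V le G) = pref Ats V le G"
  by (auto simp: fun_eq_iff pref_def formula_sem_def remove_contr_def stmt_sem_def clause_sat_def)

lemma stmt_imp_refl: "stmt_imp Ats V le P P"
  unfolding stmt_imp_def by blast

lemma stmt_imp_trans: "stmt_imp Ats V le P Q \<Longrightarrow> stmt_imp Ats V le Q R \<Longrightarrow> stmt_imp Ats V le P R"
  unfolding stmt_imp_def by blast

definition implied_stmts :: "'a set \<Rightarrow> ('a \<Rightarrow> 'v set) \<Rightarrow> ('a \<Rightarrow> 'v \<Rightarrow> 'v \<Rightarrow> bool)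
    \<Rightarrow> ('a,'v) formula \<Rightarrow> nat \<Rightarrow> nat set" where
  "implied_stmts Ats V le G i = {k. k < length G \<and> stmt_imp Ats V le (G!i) (G!k)}"

text \<open>Subsumption never cycles: the set of statements implied either shrinks, or stays
  equal (the two statements are equivalent) and the index decreases.\<close>
lemma subsumed_decreases:
  assumes "i < length G" and "j < length G" and "j \<noteq> i"
    and "stmt_imp Ats V le (G!i) (G!j)" and "\<not> stmt_imp Ats V le (G!j) (G!i) \<or> j < i"
  shows "card (implied_stmts Ats V le G j) * length G + j
           < card (implied_stmts Ats V le G i) * length G + i"
proof (cases "stmt_imp Ats V le (G!j) (G!i)")
  case True
  then have "implied_stmts Ats V le G j = implied_stmts Ats V le G i"
    using assms(4) stmt_imp_trans unfolding implied_stmts_def by blast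
  then show ?thesis using assms(5) True by simp
next
  case False
  then have "implied_stmts Ats V le G j \<subset> implied_stmts Ats V le G i"
    using assms(1,4) stmt_imp_trans stmt_imp_refl unfolding implied_stmts_def by blast
  then have less: "card (implied_stmts Ats V le G j) < card (implied_stmts Ats V le G i)"
    by (rule psubset_card_mono[rotated]) (simp add: implied_stmts_def)
  have "card (implied_stmts Ats V le G j) * length G + j
          < (card (implied_stmts Ats V le G j) + 1) * length G"
    using assms(2) by simp
  also have "\<dots> \<le> card (implied_stmts Ats V le G i) * length G"
    using less by (intro mult_right_mono) auto
  finally show ?thesis by simp
qed

lemma implies_unsubsumed:
  assumes "i < length G"
  shows "\<exists>k<length G. \<not> subsumed Ats V le G k \<and> stmt_imp Ats V le (G!i) (G!k)"
  using assms
proof (induction i rule: measure_induct_rule[of "\<lambda>i. card (implied_stmts Ats V le G i) * length G + i"])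
  case (less i)
  show ?case
  proof (cases "subsumed Ats V le G i")
    case False
    then show ?thesis using less.prems stmt_imp_refl by blast
  next
    case True
    then obtain j where j: "j < length G" "j \<noteq> i" "stmt_imp Ats V le (G!i) (G!j)"
      "\<not> stmt_imp Ats V le (G!j) (G!i) \<or> j < i"
      unfolding subsumed_def by blast
    then obtain k where "k < length G" "\<not> subsumed Ats V le G k" "stmt_imp Ats V le (G!j) (G!k)"
      using less.IH subsumed_decreases[OF less.prems j] by blast
    then show ?thesis using j(3) stmt_imp_trans by blast
  qed
qed

lemma pref_remove_subsumed: "pref Ats V le (remove_subsumed Ats V le G) = pref Ats V le G"
proof (intro ext iffI)
  fix x y
  assume "pref Ats V le (remove_subsumed Ats V le G) x y"
  then show "pref Ats V le G x y"
    by (auto simp: pref_def formula_sem_def remove_subsumed_def)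
next
  fix x y
  assume xy: "pref Ats V le G x y"
  then obtain i where i: "i < length G" "stmt_sem le (G!i) x y"
    by (auto simp: pref_def formula_sem_conv_nth)
  then obtain k where k: "k < length G" "\<not> subsumed Ats V le G k" "stmt_imp Ats V le (G!i) (G!k)"
    using implies_unsubsumed by blast
  then have "stmt_sem le (G!k) x y"
    using i xy by (auto simp: stmt_imp_def pref_def)
  moreover have "G!k \<in> set (remove_subsumed Ats V le G)"
    using k by (force simp: remove_subsumed_def)
  ultimately show "pref Ats V le (remove_subsumed Ats V le G) x y"
    using xy by (auto simp: pref_def formula_sem_def)
qed

lemma pref_cleanup: "pref Ats V le (cleanup Ats V le G) = pref Ats V le G"
  by (simp add: cleanup_def pref_remove_subsumed pref_remove_contr)


lemma length_S_round [simp]: "length (S_round Ats V le G) = length G"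
  by (simp add: S_round_def)

lemma stmt_sem_S_round_nth:
  assumes "i < length G"
  shows "stmt_sem le (S_round Ats V le G ! i) x y \<longleftrightarrow>
     stmt_sem le (G!i) x y \<and> (\<forall>j\<in>Impl Ats V le G i. \<not> stmt_sem le (G!j) y x)"
proof -
  have "finite (Impl Ats V le G i)" unfolding Impl_def by simp
  then show ?thesis
    using assms by (auto simp: S_round_def stmt_sem_foldl_conj_stmt stmt_sem_neg_swap_stmt)
qed

lemma strict_refinement_S_round:
  "strict_refinement (pref Ats V le G) (pref Ats V le (S_round Ats V le G))"
  unfolding strict_refinement_def
proof (intro conjI predicate2I)
  fix x y
  assume "pref Ats V le (S_round Ats V le G) x y"
  then show "pref Ats V le G x y"
    by (auto simp: pref_def formula_sem_conv_nth stmt_sem_S_round_nth)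
next
  fix x y
  assume strict: "strict (pref Ats V le G) x y"
  then obtain i where i: "i < length G" "stmt_sem le (G!i) x y"
    by (auto simp: strict_def pref_def formula_sem_conv_nth)
  have "\<not> stmt_sem le (G!j) y x" if "j \<in> Impl Ats V le G i" for j
    using strict that by (auto simp: strict_def pref_def Impl_def formula_sem_def)
  with i have "stmt_sem le (S_round Ats V le G ! i) x y"
    by (simp add: stmt_sem_S_round_nth)
  then show "pref Ats V le (S_round Ats V le G) x y"
    using strict i(1) by (auto simp: strict_def pref_def formula_sem_conv_nth)
qed

lemma strict_refinement_opS:
  "strict_refinement (pref Ats V le G) (pref Ats V le (opS Ats V le G))"
proof (cases "while_option (\<lambda>G. \<exists>i<length G. Impl Ats V le G i \<noteq> {}) (S_round Ats V le) G")
  case None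
  then show ?thesis by (simp add: opS_def pref_cleanup strict_refinement_refl)
next
  case (Some G')
  have "strict_refinement (pref Ats V le G) (pref Ats V le G')"
    by (rule while_option_rule[where P="\<lambda>H. strict_refinement (pref Ats V le G) (pref Ats V le H)",
          OF _ Some])
       (auto intro: strict_refinement_refl strict_refinement_trans strict_refinement_S_round)
  then show ?thesis using Some by (simp add: opS_def pref_cleanup)
qed

theorem mainTheorem1:
  fixes Ats :: "'a set" and V :: "'a \<Rightarrow> 'v set" and le :: "'a \<Rightarrow> 'v \<Rightarrow> 'v \<Rightarrow> bool"
    and F :: "('a,'v) formula" and X :: "op list" and r :: "('a,'v) ttuple set"
  assumes "taxonomies Ats V le"
    and "wf_formula Ats V le F"
    and "finite r" and "r \<subseteq> Dom Ats V"
  shows "Best (strict (prefX Ats V le F (X @ [OpS]))) r \<subseteq> Best (strict (prefX Ats V le F X)) r"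
proof -
  let ?G = "apply_ops Ats V le X F"
  have "prefX Ats V le F (X @ [OpS]) = pref Ats V le (opS Ats V le ?G)"
    by (simp add: prefX_def apply_ops_def)
  moreover have "prefX Ats V le F X = pref Ats V le ?G"
    by (simp add: prefX_def)
  ultimately show ?thesis
    using Best_antimono strict_refinement_strict_mono strict_refinement_opS by metis
qed

end
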